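(* Let $(\mu_N)$ be a sequence of deterministic initial configurations (Dirac masses on $\Omega_N$). For $H\in C^2(\mathbb T)$, $\delta>0$, $\varepsilon>0$ let $$\mathcal C_{H,\delta,\varepsilon}=\Big\{\pi\in D([0,T],\mathcal M):\ \sup_{s\le t\le s+\delta}|\langle\pi_t,H\rangle-\langle\pi_s,H\rangle|\le\varepsilon\ \ \forall s\in[0,T]\Big\}.$$ Then for every $\varepsilon>0$ and every $H\in C^2(\mathbb T)$, $$\lim_{\delta\downarrow0}\limsup_{N\to\infty}\frac1N\log\mathbb Q_{\mu_N}\big[\pi\notin\mathcal C_{H,\delta,\varepsilon}\big]=-\infty.$$
   Context: $\mathbb T_N=\mathbb Z/N\mathbb Z$, $\Omega_N=\{0,1\}^{\mathbb T_N}$, $\mathbb T=[0,1)$ the continuous torus, $T>0$ fixed (times $t$ range in $[0,T]$). SSEP with slow bond: Markov process with generator $N^2L_N$, $L_Nf(\eta)=\sum_x\xi^N_x[f(\eta^{x,x+1})-f(\eta)]$, $\xi^N_x=1$ for $x\ne-1$, $\xi^N_{-1}=1/N$, $\eta^{x,x+1}$ exchanging occupations at $x,x+1$. $\mathcal M$ = positive measures on $\mathbb T$ of mass $\le1$; $\langle\pi,H\rangle=\int H\,d\pi$; $\mathbb Q_{\mu_N}$ is the law on $D([0,T],\mathcal M)$ of $\pi^N_t=\frac1N\sum_x\eta_t(x)\delta_{x/N}$ with $\eta_0\sim\mu_N$. *)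

theory Defs
  imports "HOL-Probability.Probability"
begin

text \<open>Discrete torus T_N = {0..<N}, site x has right neighbour (x+1) mod N.
  The slow bond is the bond {-1,0} = {N-1, 0}, i.e. bond index N-1.
  A configuration is a function nat => bool (only sites < N matter).\<close>

definition swap_conf :: "nat \<Rightarrow> nat \<Rightarrow> (nat \<Rightarrow> bool) \<Rightarrow> (nat \<Rightarrow> bool)" where
  "swap_conf N x \<eta> = \<eta>(x := \<eta> ((x + 1) mod N), ((x + 1) mod N) := \<eta> x)"

text \<open>Uniformised (graphical) construction of the SSEP with slow bond and
  generator N^2 L_N: a Poisson clock of total rate N^3 (exponential holding
  times); at each ring a bond x is chosen uniformly in T_N; the exchange on
  bond x is performed, except for the slow bond N-1, where it is performed
  only if an independent coin with success probability 1/N succeeds.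
  Every bond x /= N-1 thus fires at rate N^2, the slow bond at rate N^2 * (1/N) = N.\<close>

definition step_conf :: "nat \<Rightarrow> nat \<times> bool \<Rightarrow> (nat \<Rightarrow> bool) \<Rightarrow> (nat \<Rightarrow> bool)" where
  "step_conf N xc \<eta> = (if fst xc \<noteq> N - 1 \<or> snd xc then swap_conf N (fst xc) \<eta> else \<eta>)"

definition step_pmf :: "nat \<Rightarrow> (nat \<times> bool) pmf" where
  "step_pmf N = pair_pmf (pmf_of_set {..<N}) (bernoulli_pmf (1 / real N))"

definition step_measure :: "nat \<Rightarrow> (real \<times> (nat \<times> bool)) measure" where
  "step_measure N =
     density lborel (exponential_density (real N ^ 3)) \<Otimes>\<^sub>M measure_pmf (step_pmf N)"

definition ssep_space :: "nat \<Rightarrow> (real \<times> (nat \<times> bool)) stream measure" where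
  "ssep_space N = stream_space (step_measure N)"

primrec conf_after :: "nat \<Rightarrow> (nat \<Rightarrow> bool) \<Rightarrow> (real \<times> (nat \<times> bool)) stream \<Rightarrow> nat \<Rightarrow> (nat \<Rightarrow> bool)" where
  "conf_after N \<eta>0 \<omega> 0 = \<eta>0"
| "conf_after N \<eta>0 \<omega> (Suc k) = step_conf N (snd (\<omega> !! k)) (conf_after N \<eta>0 \<omega> k)"

definition njumps :: "(real \<times> (nat \<times> bool)) stream \<Rightarrow> real \<Rightarrow> nat" where
  "njumps \<omega> t = card {n. 1 \<le> n \<and> (\<Sum>i<n. fst (\<omega> !! i)) \<le> t}"

definition eta_t :: "nat \<Rightarrow> (nat \<Rightarrow> bool) \<Rightarrow> (real \<times> (nat \<times> bool)) stream \<Rightarrow> real \<Rightarrow> (nat \<Rightarrow> bool)" where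
  "eta_t N \<eta>0 \<omega> t = conf_after N \<eta>0 \<omega> (njumps \<omega> t)"

definition pairing :: "nat \<Rightarrow> (nat \<Rightarrow> bool) \<Rightarrow> (real \<Rightarrow> real) \<Rightarrow> real" where
  "pairing N \<eta> H = (1 / real N) * (\<Sum>x<N. (if \<eta> x then 1 else 0) * H (real x / real N))"

definition not_in_C :: "real \<Rightarrow> (real \<Rightarrow> real) \<Rightarrow> real \<Rightarrow> real \<Rightarrow> (real \<Rightarrow> real) \<Rightarrow> bool" where
  "not_in_C T H \<delta> \<epsilon> F \<longleftrightarrow>
     (\<exists>s\<in>{0..T}. \<exists>t\<in>{s..min (s + \<delta>) T}. \<bar>F t - F s\<bar> > \<epsilon>)"

definition Q_notC :: "nat \<Rightarrow> real \<Rightarrow> (nat \<Rightarrow> bool) \<Rightarrow> (real \<Rightarrow> real) \<Rightarrow> real \<Rightarrow> real \<Rightarrow> real" where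
  "Q_notC N T \<eta>0 H \<delta> \<epsilon> =
     measure (ssep_space N)
       {\<omega> \<in> space (ssep_space N). not_in_C T H \<delta> \<epsilon> (\<lambda>t. pairing N (eta_t N \<eta>0 \<omega> t) H)}"

definition scaled_log :: "nat \<Rightarrow> real \<Rightarrow> ereal" where
  "scaled_log N p = (if p = 0 then - \<infinity> else ereal (ln p / real N))"

text \<open>C^2 functions on the continuous torus [0,1): 1-periodic C^2 functions on R.\<close>
definition C2_torus :: "(real \<Rightarrow> real) \<Rightarrow> bool" where
  "C2_torus H \<longleftrightarrow> (\<forall>x. H (x + 1) = H x) \<and>
     (\<exists>H' H''. (\<forall>x. (H has_real_derivative H' x) (at x)) \<and>
               (\<forall>x. (H' has_real_derivative H'' x) (at x)) \<and> continuous_on UNIV H'')"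

end

theory Submission
  imports Defs
begin

text \<open>Along the jump chain
  the pairing is a martingale with increments of order \<open>N\<^sup>-\<^sup>2\<close> plus a drift of order \<open>N\<^sup>-\<^sup>3\<close>
  per step: in the bulk the drift is a discrete Laplacian of \<open>H\<close>, and the slow bond only adds
  one first difference damped by \<open>1/N\<close>. Take \<open>K \<approx> 4 N\<^sup>3 T\<close> and \<open>L \<approx> 4 N\<^sup>3 \<delta>\<close>. If the \<open>K\<close>-th
  jump happens after time \<open>T\<close> and no \<open>L\<close> consecutive jumps among the first \<open>K\<close> fit into time
  \<open>\<delta>\<close>, every window of length \<open>\<delta>\<close> in \<open>[0, T]\<close> contains at most \<open>L\<close> jumps; for small \<open>\<delta>\<close> the
  drift over \<open>L\<close> steps is below \<open>\<epsilon>/2\<close>, so leaving \<open>C\<^sub>H\<^sub>,\<^sub>\<delta>\<^sub>,\<^sub>\<epsilon>\<close> forces the martingale to move by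
  \<open>\<epsilon>/2\<close> within \<open>L\<close> steps. Exponential Chebyshev bounds for sums of holding times and the
  Hoeffding lemma for the martingale bound each of these polynomially many events by
  \<open>exp (- \<epsilon>\<^sup>2 N / (40 A\<^sup>2 \<delta>))\<close>, where \<open>A\<close> bounds \<open>H'\<close>; so the limsup is at most
  \<open>- \<epsilon>\<^sup>2 / (80 A\<^sup>2 \<delta>)\<close>, which tends to \<open>-\<infinity>\<close> as \<open>\<delta> \<rightarrow> 0\<close>.\<close>

lemma prob_space_step_measure:
  assumes "0 < N" shows "prob_space (step_measure N)"
proof -
  interpret E: prob_space "density lborel (exponential_density (real N ^ 3))"
    using assms by (intro prob_space_exponential_density) simp
  interpret pair_prob_space "density lborel (exponential_density (real N ^ 3))" "measure_pmf (step_pmf N)" ..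
  show ?thesis unfolding step_measure_def by (rule prob_space_axioms)
qed

lemma prob_space_ssep_space: "0 < N \<Longrightarrow> prob_space (ssep_space N)"
  unfolding ssep_space_def by (rule prob_space.prob_space_stream_space[OF prob_space_step_measure])

lemma nn_integral_ssep_space_Cons:
  assumes "0 < N" "f \<in> borel_measurable (ssep_space N)"
  shows "(\<integral>\<^sup>+\<omega>. f \<omega> \<partial>ssep_space N) = (\<integral>\<^sup>+x. (\<integral>\<^sup>+\<omega>. f (x ## \<omega>) \<partial>ssep_space N) \<partial>step_measure N)"
  using prob_space.nn_integral_stream_space[OF prob_space_step_measure] assms
  unfolding ssep_space_def by blast

lemma measurable_step_measure_snd: "(\<lambda>x. g (snd x)) \<in> borel_measurable (step_measure N)"
  unfolding step_measure_def
  by (simp add: measurable_cong_sets[OF refl sets_measure_pmf_count_space])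

lemma nn_integral_step_measure_snd:
  assumes "0 < N"
  shows "(\<integral>\<^sup>+x. g (snd x) \<partial>step_measure N) = (\<integral>\<^sup>+y. g y \<partial>measure_pmf (step_pmf N))"
proof -
  interpret E: prob_space "density lborel (exponential_density (real N ^ 3))"
    using assms by (intro prob_space_exponential_density) simp
  show ?thesis
    using measurable_step_measure_snd[of g N]
    unfolding step_measure_def
    by (subst sigma_finite_measure.nn_integral_fst[symmetric, OF prob_space_imp_sigma_finite[OF prob_space_measure_pmf]])
      (use E.emeasure_space_1 in simp_all)
qed

lemma nn_integral_step_measure_fst:
  assumes "0 < N" and [measurable]: "g \<in> borel_measurable borel"
  shows "(\<integral>\<^sup>+x. g (fst x) \<partial>step_measure N) = (\<integral>\<^sup>+t. g t \<partial>density lborel (exponential_density (real N ^ 3)))"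
proof -
  interpret E: prob_space "density lborel (exponential_density (real N ^ 3))"
    using assms by (intro prob_space_exponential_density) simp
  show ?thesis
    unfolding step_measure_def
    by (subst sigma_finite_measure.nn_integral_fst[symmetric, OF prob_space_imp_sigma_finite[OF prob_space_measure_pmf]])
      (simp_all add: measure_pmf.emeasure_space_1)
qed

lemma measurable_fst_snth[measurable]: "(\<lambda>\<omega>. fst (\<omega> !! l)) \<in> borel_measurable (ssep_space N)"
  unfolding ssep_space_def step_measure_def by measurable

lemma measurable_snd_snth: "(\<lambda>\<omega>. snd (\<omega> !! l)) \<in> measurable (ssep_space N) (count_space UNIV)"
  unfolding ssep_space_def step_measure_def by measurable

lemma conf_after_add:
  "conf_after N \<eta> \<omega> (i + n) = conf_after N (conf_after N \<eta> \<omega> i) (sdrop i \<omega>) n"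
  by (induction n) (simp_all add: sdrop_snth)

lemma conf_after_Suc_Cons:
  "conf_after N \<eta> (x ## \<omega>) (Suc n) = conf_after N (step_conf N (snd x) \<eta>) \<omega> n"
  using conf_after_add[of N \<eta> "x ## \<omega>" 1 n] by simp

text \<open>The configuration after \<open>i\<close> steps depends only on the countably-valued list of the
  first \<open>i\<close> bond choices; this is what makes it measurable.\<close>

definition bond_history :: "nat \<Rightarrow> (real \<times> (nat \<times> bool)) stream \<Rightarrow> (nat \<times> bool) list" where
  "bond_history i \<omega> = map (\<lambda>l. snd (\<omega> !! l)) [0..<i]"

lemma conf_after_eq_foldl_bond_history:
  "conf_after N \<eta> \<omega> i = foldl (\<lambda>\<eta> xc. step_conf N xc \<eta>) \<eta> (bond_history i \<omega>)"
  by (induction i) (simp_all add: bond_history_def)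

lemma measurable_bond_history: "bond_history i \<in> measurable (ssep_space N) (count_space UNIV)"
proof (induction i)
  case 0 then show ?case by (simp add: bond_history_def)
next
  case (Suc i)
  have "bond_history (Suc i) = (\<lambda>\<omega>. (\<lambda>l \<omega>. l @ [snd (\<omega> !! i)]) (bond_history i \<omega>) \<omega>)"
    by (simp add: bond_history_def fun_eq_iff)
  also have "\<dots> \<in> measurable (ssep_space N) (count_space UNIV)"
    by (rule measurable_compose_countable[OF _ Suc])
      (rule measurable_compose[OF measurable_snd_snth], simp)
  finally show ?case .
qed

lemma measurable_conf_after_sdrop:
  assumes "\<And>\<zeta>. G \<zeta> \<in> borel_measurable (ssep_space N)"
  shows "(\<lambda>\<omega>. G (conf_after N \<eta> \<omega> i) (sdrop i \<omega>)) \<in> borel_measurable (ssep_space N)"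
  unfolding conf_after_eq_foldl_bond_history
proof (rule measurable_compose_countable[OF _ measurable_bond_history, where f="\<lambda>l \<omega>. G (foldl _ \<eta> l) (sdrop i \<omega>)"])
  show "(\<lambda>\<omega>. G (foldl (\<lambda>\<eta> xc. step_conf N xc \<eta>) \<eta> l) (sdrop i \<omega>)) \<in> borel_measurable (ssep_space N)" for l
    by (rule measurable_compose[OF _ assms]) (simp add: ssep_space_def)
qed

lemma measurable_conf_after:
  "(\<lambda>\<omega>. F (conf_after N \<eta> \<omega> i)) \<in> borel_measurable (ssep_space N)"
  using measurable_conf_after_sdrop[of "\<lambda>\<eta> \<omega>. F \<eta>" N \<eta> i] by simp

text \<open>Markov property of the chain, in integral form.\<close>

lemma nn_integral_conf_after_sdrop_le:
  assumes N: "0 < N" and meas: "\<And>\<zeta>. G \<zeta> \<in> borel_measurable (ssep_space N)"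
    and bound: "\<And>\<zeta>. (\<integral>\<^sup>+\<omega>. G \<zeta> \<omega> \<partial>ssep_space N) \<le> b"
  shows "(\<integral>\<^sup>+\<omega>. G (conf_after N \<eta> \<omega> i) (sdrop i \<omega>) \<partial>ssep_space N) \<le> b"
proof (induction i arbitrary: \<eta>)
  case 0 then show ?case using bound by simp
next
  case (Suc i)
  interpret prob_space "step_measure N" using prob_space_step_measure[OF N] .
  have "(\<integral>\<^sup>+\<omega>. G (conf_after N \<eta> \<omega> (Suc i)) (sdrop (Suc i) \<omega>) \<partial>ssep_space N)
     = (\<integral>\<^sup>+x. (\<integral>\<^sup>+\<omega>. G (conf_after N (step_conf N (snd x) \<eta>) \<omega> i) (sdrop i \<omega>) \<partial>ssep_space N) \<partial>step_measure N)"
    by (subst nn_integral_ssep_space_Cons[OF N measurable_conf_after_sdrop[OF meas]])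
      (simp only: conf_after_Suc_Cons sdrop.simps stream.sel)
  also have "\<dots> \<le> (\<integral>\<^sup>+x. b \<partial>step_measure N)"
    by (intro nn_integral_mono Suc)
  also have "\<dots> = b" using emeasure_space_1 by simp
  finally show ?case .
qed

subsection \<open>Holding times\<close>

definition jump_time :: "(real \<times> (nat \<times> bool)) stream \<Rightarrow> nat \<Rightarrow> real" where
  "jump_time \<omega> n = (\<Sum>i<n. fst (\<omega> !! i))"

lemma measurable_jump_time[measurable]: "(\<lambda>\<omega>. jump_time \<omega> n) \<in> borel_measurable (ssep_space N)"
  unfolding jump_time_def by measurable

lemma jump_time_add: "jump_time \<omega> (i + n) = jump_time \<omega> i + jump_time (sdrop i \<omega>) n"
  by (induction n) (simp_all add: jump_time_def sdrop_snth)

lemma jump_time_Suc_Cons: "jump_time (x ## \<omega>) (Suc n) = fst x + jump_time \<omega> n"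
  by (simp add: jump_time_def sum.lessThan_Suc_shift del: sum.lessThan_Suc)

lemma jump_time_mono:
  "(\<And>l. 0 \<le> fst (\<omega> !! l)) \<Longrightarrow> m \<le> n \<Longrightarrow> jump_time \<omega> m \<le> jump_time \<omega> n"
  unfolding jump_time_def by (rule sum_mono2) auto

lemma nn_integral_exp_neg_exponential_density:
  assumes r: "0 < r"
  shows "(\<integral>\<^sup>+t. ennreal (exp (- r * t)) \<partial>density lborel (exponential_density r)) = ennreal (1/2)"
proof -
  interpret prob_space "density lborel (exponential_density (2 * r))"
    using r by (intro prob_space_exponential_density) simp
  have eq: "ennreal (exponential_density r t) * ennreal (exp (- r * t))
      = ennreal (1/2) * ennreal (exponential_density (2 * r) t)" for t
  proof -
    have "exponential_density r t * exp (- r * t) = 1/2 * exponential_density (2 * r) t"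
      by (simp add: exponential_density_def algebra_simps flip: exp_add)
    moreover have "0 \<le> exponential_density r t" "0 \<le> exponential_density (2 * r) t"
      using r by (simp_all add: exponential_density_nonneg)
    ultimately show ?thesis
      by (metis ennreal_mult exp_ge_zero divide_nonneg_nonneg zero_le_numeral zero_le_one)
  qed
  have "(\<integral>\<^sup>+t. ennreal (exp (- r * t)) \<partial>density lborel (exponential_density r))
      = (\<integral>\<^sup>+t. ennreal (1/2) * ennreal (exponential_density (2 * r) t) \<partial>lborel)"
    by (subst nn_integral_density) (simp_all only: eq, measurable)
  also have "\<dots> = ennreal (1/2) * emeasure (density lborel (exponential_density (2 * r))) UNIV"
    by (subst nn_integral_cmult) (simp_all add: emeasure_density)
  finally show ?thesis using emeasure_space_1 by simp
qed

lemma AE_holding_times_nonneg: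
  assumes N: "0 < N"
  shows "AE \<omega> in ssep_space N. \<forall>l. 0 \<le> fst (\<omega> !! l)"
proof -
  interpret E: prob_space "density lborel (exponential_density (real N ^ 3))"
    using N by (intro prob_space_exponential_density) simp
  interpret pair_sigma_finite "density lborel (exponential_density (real N ^ 3))" "measure_pmf (step_pmf N)"
    by (intro pair_sigma_finite.intro prob_space_imp_sigma_finite E.prob_space_axioms prob_space_measure_pmf)
  interpret S: prob_space "step_measure N" by (rule prob_space_step_measure[OF N])
  have meas: "Measurable.pred (step_measure N) (\<lambda>x. 0 \<le> fst x)"
    unfolding step_measure_def by measurable
  have "AE x in step_measure N. 0 \<le> fst x"
    unfolding step_measure_def
    by (rule AE_pair_measure, measurable) (auto simp: AE_density exponential_density_def)
  from S.AE_stream_all[OF meas this] show ?thesis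
    unfolding ssep_space_def by (auto simp: stream_all_def snth_in elim!: eventually_mono)
qed

lemma nn_integral_exp_neg_jump_time_le:
  assumes N: "0 < N"
  shows "(\<integral>\<^sup>+\<omega>. ennreal (exp (- (real N ^ 3) * jump_time \<omega> L)) \<partial>ssep_space N) \<le> ennreal ((1/2) ^ L)"
proof (induction L)
  case 0
  interpret prob_space "ssep_space N" using prob_space_ssep_space N by simp
  show ?case using emeasure_space_1 by (simp add: jump_time_def)
next
  case (Suc L)
  define r where "r = real N ^ 3"
  have r: "0 < r" using N by (simp add: r_def)
  have "(\<integral>\<^sup>+\<omega>. ennreal (exp (- r * jump_time \<omega> (Suc L))) \<partial>ssep_space N)
     = (\<integral>\<^sup>+x. (\<integral>\<^sup>+\<omega>. ennreal (exp (- r * fst x)) * ennreal (exp (- r * jump_time \<omega> L)) \<partial>ssep_space N) \<partial>step_measure N)"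
    by (subst nn_integral_ssep_space_Cons[OF N], measurable)
      (simp add: jump_time_Suc_Cons distrib_left flip: exp_add ennreal_mult)
  also have "\<dots> = (\<integral>\<^sup>+x. ennreal (exp (- r * fst x)) * (\<integral>\<^sup>+\<omega>. ennreal (exp (- r * jump_time \<omega> L)) \<partial>ssep_space N) \<partial>step_measure N)"
    by (intro nn_integral_cong nn_integral_cmult) measurable
  also have "\<dots> \<le> (\<integral>\<^sup>+x. ennreal (exp (- r * fst x)) * ennreal ((1/2) ^ L) \<partial>step_measure N)"
    by (intro nn_integral_mono mult_left_mono Suc[unfolded r_def[symmetric]]) simp
  also have "\<dots> = (\<integral>\<^sup>+t. ennreal (exp (- r * t)) \<partial>density lborel (exponential_density r)) * ennreal ((1/2) ^ L)"
    unfolding r_def by (subst nn_integral_step_measure_fst[OF N]) (simp_all add: nn_integral_multc)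
  also have "\<dots> = ennreal ((1/2) ^ Suc L)"
    by (subst nn_integral_exp_neg_exponential_density[OF r], subst ennreal_mult[symmetric]) simp_all
  finally show ?case unfolding r_def .
qed

lemma nn_integral_exp_neg_jump_time_sdrop_le:
  assumes N: "0 < N"
  shows "(\<integral>\<^sup>+\<omega>. ennreal (exp (- (real N ^ 3) * jump_time (sdrop i \<omega>) L)) \<partial>ssep_space N) \<le> ennreal ((1/2) ^ L)"
proof -
  have "(\<integral>\<^sup>+\<omega>. (\<lambda>_ \<omega>. ennreal (exp (- (real N ^ 3) * jump_time \<omega> L))) (conf_after N (\<lambda>_. False) \<omega> i) (sdrop i \<omega>) \<partial>ssep_space N)
      \<le> ennreal ((1/2) ^ L)"
    by (rule nn_integral_conf_after_sdrop_le[OF N _ nn_integral_exp_neg_jump_time_le[OF N]]) measurable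
  then show ?thesis by simp
qed

lemma lipschitz_on_Icc_of_deriv:
  fixes f f' :: "real \<Rightarrow> real"
  assumes deriv: "\<And>x. (f has_real_derivative f' x) (at x)" and cont: "continuous_on {a..b} f'"
  obtains L where "0 < L" "L-lipschitz_on {a..b} f"
proof -
  have "bounded (f' ` {a..b})"
    by (rule compact_imp_bounded[OF compact_continuous_image[OF cont compact_Icc]])
  then obtain B where B: "\<forall>x\<in>{a..b}. \<bar>f' x\<bar> \<le> B"
    unfolding bounded_iff by auto
  have "(max B 0 + 1)-lipschitz_on {a..b} f"
  proof (rule bounded_derivative_imp_lipschitz)
    show "(f has_derivative (*) (f' x)) (at x within {a..b})" for x
      using deriv[of x] by (simp add: has_field_derivative_def has_derivative_at_withinI)
    show "onorm ((*) (f' x)) \<le> max B 0 + 1" if "x \<in> {a..b}" for x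
    proof (rule onorm_bound)
      have "\<bar>f' x\<bar> \<le> max B 0 + 1" using B that by fastforce
      then show "norm (f' x * y) \<le> (max B 0 + 1) * norm y" for y
        by (simp add: abs_mult mult_right_mono)
    qed simp
  qed auto
  then show ?thesis by (rule that[rotated]) simp
qed

lemma second_difference_le:
  fixes f f' :: "real \<Rightarrow> real"
  assumes deriv: "\<And>x. (f has_real_derivative f' x) (at x)"
    and lip: "L-lipschitz_on {u - h..u + h} f'" and h: "0 \<le> h"
  shows "\<bar>f (u + h) - 2 * f u + f (u - h)\<bar> \<le> 2 * L * h\<^sup>2"
proof (cases "h = 0")
  case True then show ?thesis by simp
next
  case False
  then have h: "0 < h" using h by simp
  define g where "g t = f (u + t) + f (u - t)" for t
  have "DERIV g t :> f' (u + t) - f' (u - t)" for t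
    unfolding g_def by (auto intro!: derivative_eq_intros DERIV_chain2[OF deriv] simp: algebra_simps)
  then obtain s where s: "0 < s" "s < h" "g h - g 0 = (h - 0) * (f' (u + s) - f' (u - s))"
    using MVT2[OF h, of g "\<lambda>t. f' (u + t) - f' (u - t)"] by blast
  have "\<bar>f' (u + s) - f' (u - s)\<bar> \<le> L * \<bar>(u + s) - (u - s)\<bar>"
    using lipschitz_onD[OF lip, of "u + s" "u - s"] s by (simp add: dist_real_def)
  also have "\<dots> \<le> L * (2 * h)"
    using s lipschitz_on_nonneg[OF lip] by (intro mult_left_mono) auto
  finally have "h * \<bar>f' (u + s) - f' (u - s)\<bar> \<le> h * (L * (2 * h))"
    using h by (intro mult_left_mono) auto
  moreover have "f (u + h) - 2 * f u + f (u - h) = h * (f' (u + s) - f' (u - s))"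
    using s(3) by (simp add: g_def algebra_simps)
  then have "\<bar>f (u + h) - 2 * f u + f (u - h)\<bar> = h * \<bar>f' (u + s) - f' (u - s)\<bar>"
    using h by (simp add: abs_mult)
  ultimately show ?thesis by (simp add: power2_eq_square algebra_simps)
qed

locale regular_test_function =
  fixes H :: "real \<Rightarrow> real" and A B :: real
  assumes periodic: "\<And>y. H (y + 1) = H y"
    and A_pos: "0 < A"
    and lipschitz: "A-lipschitz_on {0..2} H"
    and second_difference:
      "\<And>u h. u \<in> {0..1} \<Longrightarrow> h \<in> {0..1} \<Longrightarrow> \<bar>H (u + h) - 2 * H u + H (u - h)\<bar> \<le> B * h\<^sup>2"
begin

lemma B_nonneg: "0 \<le> B"
  using second_difference[of 0 1] by simp

end

lemma C2_torus_imp_regular_test_function: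
  assumes "C2_torus H"
  obtains A B where "regular_test_function H A B"
proof -
  obtain H' H'' where periodic: "\<And>y. H (y + 1) = H y"
    and H': "\<And>x. (H has_real_derivative H' x) (at x)"
    and H'': "\<And>x. (H' has_real_derivative H'' x) (at x)" and cont: "continuous_on UNIV H''"
    using assms unfolding C2_torus_def by blast
  have "continuous_on {0..2} H'"
    using H'' by (intro continuous_at_imp_continuous_on) (auto intro: DERIV_isCont)
  then obtain A where "0 < A" "A-lipschitz_on {0..2} H"
    using lipschitz_on_Icc_of_deriv[OF H'] by blast
  moreover obtain L where "L-lipschitz_on {-1..2} H'"
    using lipschitz_on_Icc_of_deriv[OF H'' continuous_on_subset[OF cont]] by blast
  then have "\<bar>H (u + h) - 2 * H u + H (u - h)\<bar> \<le> (2 * L) * h\<^sup>2" if "u \<in> {0..1}" "h \<in> {0..1}" for u h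
    using that by (intro second_difference_le[OF H']) (auto elim!: lipschitz_on_subset)
  ultimately show ?thesis
    using that regular_test_function.intro periodic by blast
qed

subsection \<open>Increments of the empirical pairing\<close>

lemma pairing_eq: "pairing N \<eta> H = (\<Sum>z<N. of_bool (\<eta> z) * H (real z / real N)) / real N"
  by (simp add: pairing_def of_bool_def)

definition bond_increment :: "nat \<Rightarrow> (real \<Rightarrow> real) \<Rightarrow> (nat \<Rightarrow> bool) \<Rightarrow> nat \<Rightarrow> real" where
  "bond_increment N H \<eta> x =
     (of_bool (\<eta> x) - of_bool (\<eta> ((x + 1) mod N))) * (H (real (x + 1) / real N) - H (real x / real N)) / real N"

definition step_increment :: "nat \<Rightarrow> (real \<Rightarrow> real) \<Rightarrow> (nat \<Rightarrow> bool) \<Rightarrow> nat \<times> bool \<Rightarrow> real" where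
  "step_increment N H \<eta> xc = pairing N (step_conf N xc \<eta>) H - pairing N \<eta> H"

definition pairing_drift :: "nat \<Rightarrow> (real \<Rightarrow> real) \<Rightarrow> (nat \<Rightarrow> bool) \<Rightarrow> real" where
  "pairing_drift N H \<eta> = measure_pmf.expectation (step_pmf N) (step_increment N H \<eta>)"

lemma summation_by_parts_cyclic:
  fixes E g :: "nat \<Rightarrow> real"
  assumes "E N = E 0" "g N = g 0"
  shows "(\<Sum>x<N. (E x - E (Suc x)) * g x) = (\<Sum>x<N. E (Suc x) * (g (Suc x) - g x))"
proof -
  have "(\<Sum>x<Suc N. E x * g x) = E 0 * g 0 + (\<Sum>x<N. E (Suc x) * g (Suc x))"
    by (rule sum.lessThan_Suc_shift)
  then have "(\<Sum>x<N. E x * g x) = (\<Sum>x<N. E (Suc x) * g (Suc x))"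
    using assms by simp
  then show ?thesis by (simp add: algebra_simps sum_subtractf)
qed

context regular_test_function
begin

lemma lipschitz_abs: "u \<in> {0..2} \<Longrightarrow> v \<in> {0..2} \<Longrightarrow> \<bar>H v - H u\<bar> \<le> A * \<bar>v - u\<bar>"
  using lipschitz_onD[OF lipschitz, of v u] by (simp add: dist_real_def)

lemma pairing_swap_conf:
  assumes N: "2 \<le> N" and x: "x < N"
  shows "pairing N (swap_conf N x \<eta>) H - pairing N \<eta> H = bond_increment N H \<eta> x"
proof -
  define x' where "x' = (x + 1) mod N"
  have x': "x' < N" "x' \<noteq> x"
    using N x unfolding x'_def by (auto simp: mod_Suc)
  have swap: "swap_conf N x \<eta> z = (if z = x then \<eta> x' else if z = x' then \<eta> x else \<eta> z)" for z
    unfolding swap_conf_def x'_def by auto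
  have H_x': "H (real x' / real N) = H (real (x + 1) / real N)"
  proof (cases "x + 1 = N")
    case True
    then show ?thesis using periodic[of 0] N by (simp add: x'_def)
  qed (use x in \<open>simp add: x'_def\<close>)
  define f where "f z = (of_bool (swap_conf N x \<eta> z) - of_bool (\<eta> z)) * H (real z / real N)" for z
  have "(\<Sum>z<N. of_bool (swap_conf N x \<eta> z) * H (real z / real N)) - (\<Sum>z<N. of_bool (\<eta> z) * H (real z / real N))
      = (\<Sum>z<N. f z)"
    by (simp add: f_def sum_subtractf algebra_simps)
  also have "\<dots> = (\<Sum>z\<in>{x, x'}. f z)"
    by (rule sum.mono_neutral_right) (use x x' in \<open>auto simp: f_def swap\<close>)
  also have "\<dots> = (of_bool (\<eta> x) - of_bool (\<eta> x')) * (H (real (x + 1) / real N) - H (real x / real N))"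
    using x' by (simp add: f_def swap H_x' algebra_simps)
  finally show ?thesis
    unfolding pairing_eq bond_increment_def x'_def by (simp add: diff_divide_distrib[symmetric])
qed

lemma step_increment_eq:
  "2 \<le> N \<Longrightarrow> x < N \<Longrightarrow> step_increment N H \<eta> (x, c) = (if x \<noteq> N - 1 \<or> c then bond_increment N H \<eta> x else 0)"
  by (simp add: step_increment_def step_conf_def pairing_swap_conf)

lemma abs_bond_increment_le:
  assumes N: "2 \<le> N" and x: "x < N"
  shows "\<bar>bond_increment N H \<eta> x\<bar> \<le> A / real N ^ 2"
proof -
  have N_pos: "real N > 0" using N by simp
  have "\<bar>H (real (x + 1) / real N) - H (real x / real N)\<bar> \<le> A * \<bar>real (x + 1) / real N - real x / real N\<bar>"
    using x N_pos by (intro lipschitz_abs) (auto simp: field_simps)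
  also have "\<dots> = A / real N" using N_pos by (simp add: field_simps)
  finally have "\<bar>H (real (x + 1) / real N) - H (real x / real N)\<bar> \<le> A / real N" .
  moreover have "\<bar>of_bool (\<eta> x) - of_bool (\<eta> ((x + 1) mod N)) :: real\<bar> \<le> 1" by simp
  ultimately have "\<bar>bond_increment N H \<eta> x\<bar> \<le> 1 * (A / real N) / real N"
    unfolding bond_increment_def abs_divide abs_mult abs_of_nat using N_pos
    by (intro divide_right_mono mult_mono) auto
  then show ?thesis by (simp add: power2_eq_square)
qed

lemma abs_step_increment_le: "2 \<le> N \<Longrightarrow> x < N \<Longrightarrow> \<bar>step_increment N H \<eta> (x, c)\<bar> \<le> A / real N ^ 2"
  using abs_bond_increment_le[of N x \<eta>] A_pos by (simp add: step_increment_eq)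

text \<open>Under the uniform bond choice every bond contributes its full increment with weight
  \<open>1/N\<close>, except the slow bond, whose exchange is only performed with probability \<open>1/N\<close>.\<close>

lemma pairing_drift_eq:
  assumes N: "2 \<le> N"
  shows "pairing_drift N H \<eta>
    = (\<Sum>x<N. bond_increment N H \<eta> x) / real N - (1 - 1 / real N) * bond_increment N H \<eta> (N - 1) / real N"
proof -
  have N_pos: "real N > 0" using N by simp
  have pmf_bond: "pmf (pmf_of_set {..<N}) x = 1 / real N" if "x < N" for x
    using that by (simp add: lessThan_empty_iff)
  have "pairing_drift N H \<eta> = (\<Sum>xc\<in>{..<N} \<times> UNIV. step_increment N H \<eta> xc * pmf (step_pmf N) xc)"
    unfolding pairing_drift_def
    by (rule integral_measure_pmf_real) (use N in \<open>auto simp: step_pmf_def lessThan_empty_iff\<close>)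
  also have "\<dots> = (\<Sum>x<N. \<Sum>c\<in>UNIV. step_increment N H \<eta> (x, c) * pmf (step_pmf N) (x, c))"
    by (simp add: sum.cartesian_product)
  also have "\<dots> = (\<Sum>x<N. (bond_increment N H \<eta> x - (if x = N - 1 then (1 - 1 / real N) * bond_increment N H \<eta> x else 0)) / real N)"
    by (intro sum.cong refl)
      (auto simp: UNIV_bool step_pmf_def pmf_pair step_increment_eq[OF N] pmf_bond field_simps)
  also have "\<dots> = (\<Sum>x<N. bond_increment N H \<eta> x) / real N - (1 - 1 / real N) * bond_increment N H \<eta> (N - 1) / real N"
    using N by (simp add: sum_divide_distrib[symmetric] sum_subtractf sum.delta diff_divide_distrib)
  finally show ?thesis .
qed

text \<open>Summation by parts turns the sum over all bonds into second differences of \<open>H\<close>,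
  each of order \<open>N\<^sup>-\<^sup>2\<close>.\<close>

lemma abs_sum_bond_increment_le:
  assumes N: "2 \<le> N"
  shows "\<bar>\<Sum>x<N. bond_increment N H \<eta> x\<bar> \<le> B / real N ^ 2"
proof -
  have N_pos: "real N > 0" using N by simp
  define E where "E y = (of_bool (\<eta> (y mod N)) :: real)" for y
  define g where "g x = H (real (x + 1) / real N) - H (real x / real N)" for x
  have g_N: "g N = g 0"
    using periodic[of "1 / real N"] periodic[of 0] N_pos by (simp add: g_def add_divide_distrib)
  have "\<bar>\<Sum>x<N. E (Suc x) * (g (Suc x) - g x)\<bar> \<le> (\<Sum>x<N. B / real N ^ 2)"
  proof (rule order_trans[OF sum_abs sum_mono])
    fix x assume "x \<in> {..<N}"
    then have u: "real (x + 1) / real N \<in> {0..1}" "1 / real N \<in> {0..1}"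
      using N_pos by (auto simp: field_simps)
    have "g (Suc x) - g x = H (real (x + 1) / real N + 1 / real N) - 2 * H (real (x + 1) / real N)
        + H (real (x + 1) / real N - 1 / real N)"
      using N_pos by (simp add: g_def add_divide_distrib diff_divide_distrib)
    also have "\<bar>\<dots>\<bar> \<le> B / real N ^ 2"
      using second_difference[OF u] by (simp add: power_divide)
    finally have "\<bar>g (Suc x) - g x\<bar> \<le> B / real N ^ 2" .
    moreover have "\<bar>E (Suc x)\<bar> \<le> 1" by (simp add: E_def)
    ultimately show "\<bar>E (Suc x) * (g (Suc x) - g x)\<bar> \<le> B / real N ^ 2"
      using mult_mono[of "\<bar>E (Suc x)\<bar>" 1 "\<bar>g (Suc x) - g x\<bar>" "B / real N ^ 2"] by (simp add: abs_mult)
  qed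
  also have "\<dots> = B / real N" using N_pos by (simp add: power2_eq_square)
  finally show ?thesis
    using summation_by_parts_cyclic[of E N g] g_N N_pos
    by (simp add: bond_increment_def E_def g_def sum_divide_distrib[symmetric] power2_eq_square divide_le_eq)
qed

lemma abs_pairing_drift_le:
  assumes N: "2 \<le> N"
  shows "\<bar>pairing_drift N H \<eta>\<bar> \<le> (A + B) / real N ^ 3"
proof -
  have N_pos: "real N > 0" using N by simp
  have "\<bar>pairing_drift N H \<eta>\<bar> \<le> \<bar>\<Sum>x<N. bond_increment N H \<eta> x\<bar> / real N + \<bar>bond_increment N H \<eta> (N - 1)\<bar> / real N"
    unfolding pairing_drift_eq[OF N] using N_pos
    by (intro order_trans[OF abs_triangle_ineq4] add_mono)
      (auto simp: abs_mult abs_divide intro!: divide_right_mono mult_left_le_one_le)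
  also have "\<dots> \<le> (B / real N ^ 2) / real N + (A / real N ^ 2) / real N"
    using abs_sum_bond_increment_le[OF N] abs_bond_increment_le[OF N, of "N - 1"] N_pos
    by (intro add_mono divide_right_mono) auto
  also have "\<dots> = (A + B) / real N ^ 3"
    by (simp add: power3_eq_cube power2_eq_square add_divide_distrib)
  finally show ?thesis .
qed

end

subsection \<open>The exponential martingale bound\<close>

definition pairing_martingale ::
  "nat \<Rightarrow> (real \<Rightarrow> real) \<Rightarrow> (nat \<Rightarrow> bool) \<Rightarrow> (real \<times> (nat \<times> bool)) stream \<Rightarrow> nat \<Rightarrow> real" where
  "pairing_martingale N H \<eta> \<omega> n =
     pairing N (conf_after N \<eta> \<omega> n) H - pairing N \<eta> H - (\<Sum>l<n. pairing_drift N H (conf_after N \<eta> \<omega> l))"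

lemma pairing_martingale_Suc_Cons:
  "pairing_martingale N H \<eta> (x ## \<omega>) (Suc n)
     = (step_increment N H \<eta> (snd x) - pairing_drift N H \<eta>) + pairing_martingale N H (step_conf N (snd x) \<eta>) \<omega> n"
  unfolding pairing_martingale_def step_increment_def sum.lessThan_Suc_shift conf_after_Suc_Cons
  by simp

lemma measurable_pairing_martingale[measurable]:
  "(\<lambda>\<omega>. pairing_martingale N H \<eta> \<omega> n) \<in> borel_measurable (ssep_space N)"
  unfolding pairing_martingale_def
  by (intro borel_measurable_diff borel_measurable_sum measurable_conf_after borel_measurable_const)

lemma pairing_conf_after_add:
  "pairing N (conf_after N \<eta> \<omega> (i + n)) H - pairing N (conf_after N \<eta> \<omega> i) H
   = pairing_martingale N H (conf_after N \<eta> \<omega> i) (sdrop i \<omega>) n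
     + (\<Sum>l<n. pairing_drift N H (conf_after N (conf_after N \<eta> \<omega> i) (sdrop i \<omega>) l))"
  unfolding conf_after_add pairing_martingale_def by simp

context regular_test_function
begin

lemma nn_integral_exp_step_increment_le:
  assumes N: "2 \<le> N"
  shows "(\<integral>\<^sup>+xc. ennreal (exp (\<theta> * (step_increment N H \<eta> xc - pairing_drift N H \<eta>))) \<partial>measure_pmf (step_pmf N))
     \<le> ennreal (exp (\<theta>\<^sup>2 * (A / real N ^ 2)\<^sup>2 / 2))"
proof -
  define c where "c = A / real N ^ 2"
  have bounded: "AE xc in measure_pmf (step_pmf N). s * step_increment N H \<eta> xc \<in> {-c..c}"
    if "\<bar>s\<bar> = 1" for s
    unfolding AE_measure_pmf_iff
  proof
    fix xc assume "xc \<in> set_pmf (step_pmf N)"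
    then have "fst xc < N" using N by (auto simp: step_pmf_def lessThan_empty_iff)
    then have "\<bar>step_increment N H \<eta> (fst xc, snd xc)\<bar> \<le> c"
      unfolding c_def by (rule abs_step_increment_le[OF N])
    then have "\<bar>s * step_increment N H \<eta> xc\<bar> \<le> c" using that by (simp add: abs_mult)
    then show "s * step_increment N H \<eta> xc \<in> {-c..c}" by auto
  qed
  have measurable: "f \<in> borel_measurable (measure_pmf (step_pmf N))" for f :: "nat \<times> bool \<Rightarrow> real"
    by (simp add: measurable_cong_sets[OF sets_measure_pmf_count_space refl])
  have hoeffding: "(\<integral>\<^sup>+xc. ennreal (exp (l * (s * step_increment N H \<eta> xc - s * pairing_drift N H \<eta>))) \<partial>measure_pmf (step_pmf N))
      \<le> ennreal (exp (l\<^sup>2 * (A / real N ^ 2)\<^sup>2 / 2))" if "0 < l" "\<bar>s\<bar> = 1" for l s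
  proof -
    interpret interval_bounded_random_variable "measure_pmf (step_pmf N)" "\<lambda>xc. s * step_increment N H \<eta> xc" "-c" c
      by unfold_locales (rule measurable, rule bounded[OF that(2)])
    have "(c - - c)\<^sup>2 / 8 = (A / real N ^ 2)\<^sup>2 / 2" by (simp add: c_def power2_eq_square)
    then show ?thesis
      using Hoeffdings_lemma_nn_integral[OF that(1)] by (simp add: pairing_drift_def mult.assoc)
  qed
  consider "0 < \<theta>" | "\<theta> = 0" | "\<theta> < 0" by linarith
  then show ?thesis
  proof cases
    case 1 then show ?thesis using hoeffding[of \<theta> 1] by simp
  next
    case 2 then show ?thesis by (simp add: measure_pmf.emeasure_space_1)
  next
    case 3 then show ?thesis using hoeffding[of "- \<theta>" "- 1"] by (simp add: algebra_simps)
  qed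
qed

lemma nn_integral_exp_pairing_martingale_le:
  assumes N: "2 \<le> N"
  shows "(\<integral>\<^sup>+\<omega>. ennreal (exp (\<theta> * pairing_martingale N H \<eta> \<omega> n)) \<partial>ssep_space N)
     \<le> ennreal (exp (real n * (\<theta>\<^sup>2 * (A / real N ^ 2)\<^sup>2 / 2)))"
proof (induction n arbitrary: \<eta>)
  case 0
  interpret prob_space "ssep_space N" using prob_space_ssep_space N by simp
  show ?case using emeasure_space_1 by (simp add: pairing_martingale_def)
next
  case (Suc n)
  define q where "q = \<theta>\<^sup>2 * (A / real N ^ 2)\<^sup>2 / 2"
  define D where "D xc = ennreal (exp (\<theta> * (step_increment N H \<eta> xc - pairing_drift N H \<eta>)))" for xc
  have N0: "0 < N" using N by simp
  have "(\<integral>\<^sup>+\<omega>. ennreal (exp (\<theta> * pairing_martingale N H \<eta> \<omega> (Suc n))) \<partial>ssep_space N)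
      = (\<integral>\<^sup>+x. (\<integral>\<^sup>+\<omega>. D (snd x) * ennreal (exp (\<theta> * pairing_martingale N H (step_conf N (snd x) \<eta>) \<omega> n)) \<partial>ssep_space N) \<partial>step_measure N)"
    by (subst nn_integral_ssep_space_Cons[OF N0], measurable)
      (simp add: pairing_martingale_Suc_Cons distrib_left exp_add ennreal_mult D_def)
  also have "\<dots> = (\<integral>\<^sup>+x. D (snd x) * (\<integral>\<^sup>+\<omega>. ennreal (exp (\<theta> * pairing_martingale N H (step_conf N (snd x) \<eta>) \<omega> n)) \<partial>ssep_space N) \<partial>step_measure N)"
    by (intro nn_integral_cong nn_integral_cmult) measurable
  also have "\<dots> \<le> (\<integral>\<^sup>+x. D (snd x) * ennreal (exp (real n * q)) \<partial>step_measure N)"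
    by (intro nn_integral_mono mult_left_mono Suc[unfolded q_def[symmetric]]) simp
  also have "\<dots> = (\<integral>\<^sup>+x. D (snd x) \<partial>step_measure N) * ennreal (exp (real n * q))"
    by (rule nn_integral_multc[OF measurable_step_measure_snd])
  also have "\<dots> = (\<integral>\<^sup>+xc. D xc \<partial>measure_pmf (step_pmf N)) * ennreal (exp (real n * q))"
    by (simp only: nn_integral_step_measure_snd[OF N0])
  also have "\<dots> \<le> ennreal (exp q) * ennreal (exp (real n * q))"
    unfolding D_def q_def by (intro mult_right_mono nn_integral_exp_step_increment_le[OF N]) simp
  also have "\<dots> = ennreal (exp (real (Suc n) * q))"
    by (simp add: algebra_simps flip: ennreal_mult exp_add)
  finally show ?case unfolding q_def .
qed

lemma nn_integral_exp_pairing_martingale_sdrop_le: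
  assumes N: "2 \<le> N" and n: "n \<le> L"
  shows "(\<integral>\<^sup>+\<omega>. ennreal (exp (\<theta> * pairing_martingale N H (conf_after N \<eta> \<omega> i) (sdrop i \<omega>) n)) \<partial>ssep_space N)
     \<le> ennreal (exp (real L * (\<theta>\<^sup>2 * (A / real N ^ 2)\<^sup>2 / 2)))"
proof (rule nn_integral_conf_after_sdrop_le)
  fix \<zeta>
  have "exp (real n * (\<theta>\<^sup>2 * (A / real N ^ 2)\<^sup>2 / 2)) \<le> exp (real L * (\<theta>\<^sup>2 * (A / real N ^ 2)\<^sup>2 / 2))"
    using n by (intro exp_mono mult_right_mono) auto
  then show "(\<integral>\<^sup>+\<omega>. ennreal (exp (\<theta> * pairing_martingale N H \<zeta> \<omega> n)) \<partial>ssep_space N)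
      \<le> ennreal (exp (real L * (\<theta>\<^sup>2 * (A / real N ^ 2)\<^sup>2 / 2)))"
    by (intro order_trans[OF nn_integral_exp_pairing_martingale_le[OF N]] ennreal_leI)
qed (use N in simp_all)

end

subsection \<open>Paths with slowly varying jump times\<close>

lemma down_closed_eq_atLeastAtMost_card:
  assumes "finite A" and "\<And>n. n \<in> A \<Longrightarrow> 1 \<le> n"
    and "\<And>m n. n \<in> A \<Longrightarrow> 1 \<le> m \<Longrightarrow> m \<le> n \<Longrightarrow> m \<in> A"
  shows "A = {1..card A}"
proof (cases "A = {}")
  case False
  define m where "m = Max A"
  have "m \<in> A" using assms(1) False by (simp add: m_def)
  have "A \<subseteq> {1..m}" using assms(1,2) by (auto simp: m_def)
  moreover have "{1..m} \<subseteq> A" using assms(3) \<open>m \<in> A\<close> by auto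
  ultimately have "A = {1..m}" by (rule subset_antisym)
  then show ?thesis by simp
qed simp

lemma njumps_eq:
  assumes nonneg: "\<And>l. 0 \<le> fst (\<omega> !! l)" and t: "0 \<le> t" "t < jump_time \<omega> K"
  shows "{n. 1 \<le> n \<and> jump_time \<omega> n \<le> t} = {1..njumps \<omega> t}"
proof -
  define S where "S = {n. 1 \<le> n \<and> jump_time \<omega> n \<le> t}"
  have "S \<subseteq> {..<K}"
  proof
    fix n assume "n \<in> S"
    then have "jump_time \<omega> n < jump_time \<omega> K" using t by (simp add: S_def)
    then show "n \<in> {..<K}"
      using jump_time_mono[OF nonneg, of K n] by (cases "K \<le> n") auto
  qed
  then have "finite S" by (rule finite_subset) simp
  then have "S = {1..card S}"
  proof (rule down_closed_eq_atLeastAtMost_card)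
    show "m \<in> S" if "n \<in> S" "1 \<le> m" "m \<le> n" for m n
      using that jump_time_mono[OF nonneg \<open>m \<le> n\<close>] by (simp add: S_def)
  qed (simp add: S_def)
  then show ?thesis by (simp add: S_def njumps_def jump_time_def)
qed

lemma jump_time_njumps_le:
  assumes "\<And>l. 0 \<le> fst (\<omega> !! l)" and "0 \<le> t" "t < jump_time \<omega> K"
  shows "jump_time \<omega> (njumps \<omega> t) \<le> t"
proof (cases "njumps \<omega> t = 0")
  case False
  then have "njumps \<omega> t \<in> {1..njumps \<omega> t}" by simp
  then have "njumps \<omega> t \<in> {n. 1 \<le> n \<and> jump_time \<omega> n \<le> t}"
    by (simp only: njumps_eq[OF assms])
  then show ?thesis by simp
qed (simp add: jump_time_def \<open>0 \<le> t\<close>)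

lemma less_jump_time_Suc_njumps:
  assumes "\<And>l. 0 \<le> fst (\<omega> !! l)" and "0 \<le> t" "t < jump_time \<omega> K"
  shows "t < jump_time \<omega> (Suc (njumps \<omega> t))"
proof -
  have "Suc (njumps \<omega> t) \<notin> {1..njumps \<omega> t}" by simp
  then have "Suc (njumps \<omega> t) \<notin> {n. 1 \<le> n \<and> jump_time \<omega> n \<le> t}"
    by (simp only: njumps_eq[OF assms] not_False_eq_True)
  then show ?thesis by simp
qed

text \<open>If no \<open>L\<close> consecutive holding times before the \<open>K\<close>-th jump add up to at most \<open>\<delta>\<close>,
  any time window of length \<open>\<delta>\<close> in \<open>[0, T]\<close> contains at most \<open>L\<close> jumps.\<close>

lemma not_in_C_jump_path_imp:
  assumes nonneg: "\<And>l. 0 \<le> fst (\<omega> !! l)" and K: "T < jump_time \<omega> K"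
    and windows: "\<And>i. i < K \<Longrightarrow> \<delta> < jump_time (sdrop i \<omega>) L"
    and "not_in_C T H \<delta> \<epsilon> (\<lambda>t. F (njumps \<omega> t))"
  obtains i n where "i < K" "n \<le> L" "\<epsilon> < \<bar>F (i + n) - F i\<bar>"
proof -
  obtain s t where s: "0 \<le> s" and st: "s \<le> t" "t \<le> T" "t \<le> s + \<delta>"
    and big: "\<epsilon> < \<bar>F (njumps \<omega> t) - F (njumps \<omega> s)\<bar>"
    using assms(4) unfolding not_in_C_def by auto
  define a b where "a = njumps \<omega> s" and "b = njumps \<omega> t"
  have tK: "t < jump_time \<omega> K" "s < jump_time \<omega> K" using st K by linarith+
  note jump_time_le = jump_time_njumps_le[OF nonneg _ tK(1)] jump_time_njumps_le[OF nonneg s tK(2)]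
  note less_jump_time = less_jump_time_Suc_njumps[OF nonneg _ tK(1)] less_jump_time_Suc_njumps[OF nonneg s tK(2)]
  have ba: "b < K"
  proof (rule ccontr)
    assume "\<not> b < K"
    then have "jump_time \<omega> K \<le> jump_time \<omega> b" by (intro jump_time_mono[OF nonneg]) simp
    then show False using jump_time_le(1) s st tK(1) by (simp add: b_def)
  qed
  have ab: "a \<le> b"
  proof (rule ccontr)
    assume "\<not> a \<le> b"
    then have "jump_time \<omega> (Suc b) \<le> jump_time \<omega> a" by (intro jump_time_mono[OF nonneg]) simp
    then show False using jump_time_le(2) less_jump_time(1) s st by (simp add: a_def b_def)
  qed
  have "b \<le> a + L"
  proof (rule ccontr)
    assume "\<not> b \<le> a + L"
    then have "jump_time \<omega> (Suc a + L) \<le> jump_time \<omega> b"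
      by (intro jump_time_mono[OF nonneg]) simp
    then have "jump_time \<omega> (Suc a) + jump_time (sdrop (Suc a) \<omega>) L \<le> jump_time \<omega> b"
      by (simp only: jump_time_add)
    moreover have "\<delta> < jump_time (sdrop (Suc a) \<omega>) L"
      using windows[of "Suc a"] \<open>\<not> b \<le> a + L\<close> ba by linarith
    ultimately show False
      using jump_time_le(1) less_jump_time(2) s st by (simp add: a_def b_def)
  qed
  then show ?thesis
    using that[of a "b - a"] ab ba big by (simp add: a_def b_def)
qed

subsection \<open>The large deviation estimate\<close>

lemma measure_le_exp_moment:
  assumes [measurable]: "f \<in> borel_measurable M" and m: "0 \<le> m" and b: "0 \<le> b"
    and moment: "(\<integral>\<^sup>+\<omega>. ennreal (exp (m * f \<omega>)) \<partial>M) \<le> ennreal b"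
  shows "measure M {\<omega> \<in> space M. a \<le> f \<omega>} \<le> exp (- m * a) * b"
proof -
  have "{\<omega> \<in> space M. a \<le> f \<omega>} \<in> sets M" by measurable
  then have "emeasure M {\<omega> \<in> space M. a \<le> f \<omega>} = (\<integral>\<^sup>+\<omega>. indicator {\<omega> \<in> space M. a \<le> f \<omega>} \<omega> \<partial>M)"
    by simp
  also have "\<dots> \<le> (\<integral>\<^sup>+\<omega>. ennreal (exp (- m * a)) * ennreal (exp (m * f \<omega>)) \<partial>M)"
  proof (intro nn_integral_mono)
    fix \<omega> assume "\<omega> \<in> space M"
    have "a \<le> f \<omega> \<Longrightarrow> 1 \<le> exp (- m * a) * exp (m * f \<omega>)"
      using mult_left_mono[of a "f \<omega>" m] m by (simp add: mult.commute flip: exp_add)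
    then show "indicator {\<omega> \<in> space M. a \<le> f \<omega>} \<omega> \<le> ennreal (exp (- m * a)) * ennreal (exp (m * f \<omega>))"
      by (auto simp: indicator_def simp flip: ennreal_mult)
  qed
  also have "\<dots> = ennreal (exp (- m * a)) * (\<integral>\<^sup>+\<omega>. ennreal (exp (m * f \<omega>)) \<partial>M)"
    by (rule nn_integral_cmult) measurable
  also have "\<dots> \<le> ennreal (exp (- m * a) * b)"
    using moment b by (simp add: ennreal_mult mult_left_mono)
  finally show ?thesis
    unfolding measure_def using b by (intro enn2real_leI) simp_all
qed

lemma measure_jump_time_sdrop_le:
  assumes N: "0 < N"
  shows "measure (ssep_space N) {\<omega> \<in> space (ssep_space N). jump_time (sdrop i \<omega>) K \<le> T}
    \<le> exp (real N ^ 3 * T) * (1/2) ^ K"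
proof -
  have [measurable]: "(\<lambda>\<omega>. jump_time (sdrop i \<omega>) K) \<in> borel_measurable (ssep_space N)"
    unfolding jump_time_def sdrop_snth by measurable
  have "(\<integral>\<^sup>+\<omega>. ennreal (exp (real N ^ 3 * - jump_time (sdrop i \<omega>) K)) \<partial>ssep_space N) \<le> ennreal ((1/2) ^ K)"
    using nn_integral_exp_neg_jump_time_sdrop_le[OF N, of i K] by simp
  from measure_le_exp_moment[OF _ _ _ this, of "- T"] show ?thesis by simp
qed

context regular_test_function
begin

lemma measure_abs_pairing_martingale_ge_le:
  assumes N: "2 \<le> N" and n: "n \<le> L" and L: "0 < L" and a: "0 < a"
  shows "measure (ssep_space N) {\<omega> \<in> space (ssep_space N). a \<le> \<bar>pairing_martingale N H (conf_after N \<eta> \<omega> i) (sdrop i \<omega>) n\<bar>}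
    \<le> 2 * exp (- a\<^sup>2 / (2 * real L * (A / real N ^ 2)\<^sup>2))"
proof -
  define M where "M \<omega> = pairing_martingale N H (conf_after N \<eta> \<omega> i) (sdrop i \<omega>) n" for \<omega>
  define c where "c = A / real N ^ 2"
  define \<theta> where "\<theta> = a / (real L * c\<^sup>2)"
  have c: "0 < c" using A_pos N by (simp add: c_def)
  have \<theta>: "0 \<le> \<theta>" using a by (simp add: \<theta>_def)
  have [measurable]: "M \<in> borel_measurable (ssep_space N)"
    unfolding M_def by (rule measurable_conf_after_sdrop) measurable
  have exponent: "exp (- \<theta> * a) * exp (real L * (\<theta>\<^sup>2 * c\<^sup>2 / 2)) = exp (- a\<^sup>2 / (2 * real L * c\<^sup>2))"
    using L c by (simp add: \<theta>_def field_simps power2_eq_square flip: exp_add)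
  have moment: "(\<integral>\<^sup>+\<omega>. ennreal (exp (\<theta> * (s * M \<omega>))) \<partial>ssep_space N) \<le> ennreal (exp (real L * (\<theta>\<^sup>2 * c\<^sup>2 / 2)))"
    if "s\<^sup>2 = 1" for s
    using nn_integral_exp_pairing_martingale_sdrop_le[OF N n, of "\<theta> * s"] that
    by (simp add: M_def c_def power_mult_distrib mult.assoc)
  have "(\<integral>\<^sup>+\<omega>. ennreal (exp (\<theta> * M \<omega>)) \<partial>ssep_space N) \<le> ennreal (exp (real L * (\<theta>\<^sup>2 * c\<^sup>2 / 2)))"
    using moment[of 1] by simp
  from measure_le_exp_moment[OF _ \<theta> _ this, of a]
  have "measure (ssep_space N) {\<omega> \<in> space (ssep_space N). a \<le> M \<omega>} \<le> exp (- a\<^sup>2 / (2 * real L * c\<^sup>2))"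
    unfolding exponent by simp
  moreover have "(\<integral>\<^sup>+\<omega>. ennreal (exp (\<theta> * - M \<omega>)) \<partial>ssep_space N) \<le> ennreal (exp (real L * (\<theta>\<^sup>2 * c\<^sup>2 / 2)))"
    using moment[of "- 1"] by simp
  from measure_le_exp_moment[OF _ \<theta> _ this, of a]
  have "measure (ssep_space N) {\<omega> \<in> space (ssep_space N). a \<le> - M \<omega>} \<le> exp (- a\<^sup>2 / (2 * real L * c\<^sup>2))"
    unfolding exponent by simp
  moreover have "{\<omega> \<in> space (ssep_space N). a \<le> \<bar>M \<omega>\<bar>}
      = {\<omega> \<in> space (ssep_space N). a \<le> M \<omega>} \<union> {\<omega> \<in> space (ssep_space N). a \<le> - M \<omega>}"
    by auto
  moreover have "measure (ssep_space N) ({\<omega> \<in> space (ssep_space N). a \<le> M \<omega>} \<union> {\<omega> \<in> space (ssep_space N). a \<le> - M \<omega>})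
      \<le> measure (ssep_space N) {\<omega> \<in> space (ssep_space N). a \<le> M \<omega>} + measure (ssep_space N) {\<omega> \<in> space (ssep_space N). a \<le> - M \<omega>}"
    by (rule measure_Un_le; measurable)
  ultimately show ?thesis
    unfolding M_def c_def by simp
qed

lemma abs_sum_pairing_drift_le:
  assumes "2 \<le> N"
  shows "\<bar>\<Sum>l<n. pairing_drift N H (g l)\<bar> \<le> real n * ((A + B) / real N ^ 3)"
proof -
  have "\<bar>\<Sum>l<n. pairing_drift N H (g l)\<bar> \<le> (\<Sum>l<n. \<bar>pairing_drift N H (g l)\<bar>)"
    by (rule sum_abs)
  also have "\<dots> \<le> (\<Sum>l<n. (A + B) / real N ^ 3)"
    by (intro sum_mono abs_pairing_drift_le assms)
  finally show ?thesis by simp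
qed

lemma not_in_C_pairing_path_imp:
  assumes N: "2 \<le> N" and drift: "real L * ((A + B) / real N ^ 3) \<le> \<epsilon> / 2"
    and nonneg: "\<And>l. 0 \<le> fst (\<omega> !! l)" and K: "T < jump_time \<omega> K"
    and windows: "\<And>i. i < K \<Longrightarrow> \<delta> < jump_time (sdrop i \<omega>) L"
    and "not_in_C T H \<delta> \<epsilon> (\<lambda>t. pairing N (eta_t N \<eta> \<omega> t) H)"
  obtains i n where "i < K" "n \<le> L"
    "\<epsilon> / 2 < \<bar>pairing_martingale N H (conf_after N \<eta> \<omega> i) (sdrop i \<omega>) n\<bar>"
proof -
  define F where "F k = pairing N (conf_after N \<eta> \<omega> k) H" for k
  obtain i n where i: "i < K" and n: "n \<le> L" and big: "\<epsilon> < \<bar>F (i + n) - F i\<bar>"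
    using not_in_C_jump_path_imp[OF nonneg K windows, of H \<epsilon> F] assms(6)
    unfolding F_def eta_t_def by blast
  have "real n * ((A + B) / real N ^ 3) \<le> real L * ((A + B) / real N ^ 3)"
    using n A_pos B_nonneg by (intro mult_right_mono) auto
  then have "\<bar>\<Sum>l<n. pairing_drift N H (conf_after N (conf_after N \<eta> \<omega> i) (sdrop i \<omega>) l)\<bar> \<le> \<epsilon> / 2"
    using abs_sum_pairing_drift_le[OF N, of "conf_after N (conf_after N \<eta> \<omega> i) (sdrop i \<omega>)" n] drift
    by linarith
  then show ?thesis
    using that[OF i n] big unfolding F_def pairing_conf_after_add by linarith
qed

lemma Q_notC_le:
  fixes \<eta>0 :: "nat \<Rightarrow> bool"
  assumes N: "2 \<le> N" and L: "1 \<le> L" and \<epsilon>: "0 < \<epsilon>"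
    and drift: "real L * ((A + B) / real N ^ 3) \<le> \<epsilon> / 2"
  shows "Q_notC N T \<eta>0 H \<delta> \<epsilon> \<le> exp (real N ^ 3 * T) * (1/2) ^ K + real K * (exp (real N ^ 3 * \<delta>) * (1/2) ^ L)
     + real K * (real L + 1) * (2 * exp (- (\<epsilon>/2)\<^sup>2 / (2 * real L * (A / real N ^ 2)\<^sup>2)))"
proof -
  have N0: "0 < N" using N by simp
  interpret S: prob_space "ssep_space N" by (rule prob_space_ssep_space[OF N0])
  define M where "M \<omega> i n = pairing_martingale N H (conf_after N \<eta>0 \<omega> i) (sdrop i \<omega>) n" for \<omega> i n
  define X where "X = {\<omega> \<in> space (ssep_space N). not_in_C T H \<delta> \<epsilon> (\<lambda>t. pairing N (eta_t N \<eta>0 \<omega> t) H)}"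
  define slow where "slow = {\<omega> \<in> space (ssep_space N). jump_time \<omega> K \<le> T}"
  define fast where "fast i = {\<omega> \<in> space (ssep_space N). jump_time (sdrop i \<omega>) L \<le> \<delta>}" for i
  define big where "big i n = {\<omega> \<in> space (ssep_space N). \<epsilon> / 2 \<le> \<bar>M \<omega> i n\<bar>}" for i n
  have [measurable]: "(\<lambda>\<omega>. M \<omega> i n) \<in> borel_measurable (ssep_space N)" for i n
    unfolding M_def by (rule measurable_conf_after_sdrop) measurable
  have [measurable]: "(\<lambda>\<omega>. jump_time (sdrop i \<omega>) L) \<in> borel_measurable (ssep_space N)" for i L
    unfolding jump_time_def sdrop_snth by measurable
  have sets: "slow \<in> sets (ssep_space N)" "fast i \<in> sets (ssep_space N)" "big i n \<in> sets (ssep_space N)" for i n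
    unfolding slow_def fast_def big_def by (measurable, measurable, measurable)
  have "AE \<omega> in ssep_space N. \<omega> \<in> X \<longrightarrow> \<omega> \<in> slow \<union> (\<Union>i<K. fast i) \<union> (\<Union>i<K. \<Union>n\<in>{..L}. big i n)"
    using AE_holding_times_nonneg[OF N0]
  proof eventually_elim
    case (elim \<omega>)
    show ?case
    proof (rule impI, rule ccontr)
      assume "\<omega> \<in> X" and "\<omega> \<notin> slow \<union> (\<Union>i<K. fast i) \<union> (\<Union>i<K. \<Union>n\<in>{..L}. big i n)"
      then have K: "T < jump_time \<omega> K" and windows: "\<And>i. i < K \<Longrightarrow> \<delta> < jump_time (sdrop i \<omega>) L"
        and path: "not_in_C T H \<delta> \<epsilon> (\<lambda>t. pairing N (eta_t N \<eta>0 \<omega> t) H)"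
        and small: "\<And>i n. i < K \<Longrightarrow> n \<le> L \<Longrightarrow> \<bar>M \<omega> i n\<bar> < \<epsilon> / 2"
        by (auto simp: X_def slow_def fast_def big_def not_le)
      obtain i n where "i < K" "n \<le> L" "\<epsilon> / 2 < \<bar>M \<omega> i n\<bar>"
        unfolding M_def by (rule not_in_C_pairing_path_imp[OF N drift elim[rule_format] K windows path])
      with small show False by fastforce
    qed
  qed
  then have "Q_notC N T \<eta>0 H \<delta> \<epsilon> \<le> measure (ssep_space N) (slow \<union> (\<Union>i<K. fast i) \<union> (\<Union>i<K. \<Union>n\<in>{..L}. big i n))"
    unfolding Q_notC_def X_def[symmetric] using sets by (intro S.finite_measure_mono_AE) auto
  also have "\<dots> \<le> measure (ssep_space N) slow + (\<Sum>i<K. measure (ssep_space N) (fast i))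
      + (\<Sum>i<K. \<Sum>n\<in>{..L}. measure (ssep_space N) (big i n))"
    using sets by (intro order_trans[OF measure_Un_le] add_mono order_trans[OF measure_UNION_le] sum_mono) auto
  also have "\<dots> \<le> exp (real N ^ 3 * T) * (1/2) ^ K + (\<Sum>i<K. exp (real N ^ 3 * \<delta>) * (1/2) ^ L)
      + (\<Sum>i<K. \<Sum>n\<in>{..L}. 2 * exp (- (\<epsilon>/2)\<^sup>2 / (2 * real L * (A / real N ^ 2)\<^sup>2)))"
    using measure_jump_time_sdrop_le[OF N0, of 0 K T] L \<epsilon> unfolding slow_def fast_def big_def M_def
    by (intro add_mono sum_mono measure_jump_time_sdrop_le[OF N0] measure_abs_pairing_martingale_ge_le[OF N]) auto
  finally show ?thesis by (simp add: ac_simps)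
qed

end

lemma exp_mult_half_power_le:
  assumes "4 * a \<le> real K"
  shows "exp a * (1/2) ^ K \<le> exp (- a)"
proof -
  have "exp (real K / 2) \<le> 2 ^ K"
    using power_mono[OF exp_half_le2, of K] by (simp flip: exp_of_nat_mult)
  then have "(1/2) ^ K \<le> exp (- (real K / 2))"
    by (simp add: exp_minus power_one_over field_simps)
  also have "\<dots> \<le> exp (- 2 * a)" using assms by simp
  finally have "exp a * (1/2) ^ K \<le> exp a * exp (- 2 * a)"
    by (rule mult_left_mono) simp
  then show ?thesis by (simp flip: exp_add)
qed

lemma limsup_scaled_log_le:
  fixes p :: "nat \<Rightarrow> real"
  assumes C: "0 < C" and k': "k' < k" and nonneg: "\<And>N. 0 \<le> p N"
    and bound: "eventually (\<lambda>N. p N \<le> C * real N ^ d * exp (- k * real N)) sequentially"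
  shows "limsup (\<lambda>N. scaled_log N (p N)) \<le> ereal (- k')"
proof (rule Limsup_bounded)
  have "(\<lambda>N. ln C / real N + real d * (ln (real N) / real N)) \<longlonglongrightarrow> 0 + real d * 0"
    by (intro tendsto_add tendsto_mult tendsto_const lim_const_over_n lim_ln_over_n)
  then have "eventually (\<lambda>N. ln C / real N + real d * (ln (real N) / real N) < k - k') sequentially"
    by (rule order_tendstoD) (use k' in simp)
  moreover have "eventually (\<lambda>N. 1 \<le> N) sequentially"
    by (rule eventually_ge_at_top)
  ultimately show "eventually (\<lambda>N. scaled_log N (p N) \<le> ereal (- k')) sequentially"
    using bound
  proof eventually_elim
    case (elim N)
    show ?case
    proof (cases "p N = 0")
      case False
      then have p: "0 < p N" using nonneg[of N] by simp
      have N: "0 < real N" using elim(2) by simp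
      have "ln (p N) \<le> ln (C * real N ^ d * exp (- k * real N))"
        using p elim(3) by (subst ln_le_cancel_iff) auto
      also have "\<dots> = ln C + real d * ln (real N) - k * real N"
        using C N by (simp add: ln_mult ln_realpow)
      finally have "ln (p N) / real N \<le> (ln C + real d * ln (real N) - k * real N) / real N"
        using N by (simp add: divide_right_mono)
      also have "\<dots> = ln C / real N + real d * (ln (real N) / real N) - k"
        using N by (simp add: field_simps)
      finally show ?thesis using False elim(1) by (simp add: scaled_log_def)
    qed (simp add: scaled_log_def)
  qed
qed

lemma tendsto_MInfty_at_right_0_of_le:
  fixes f :: "real \<Rightarrow> ereal"
  assumes d: "0 < d" and k: "0 < k" and le: "\<And>\<delta>. 0 < \<delta> \<Longrightarrow> \<delta> < d \<Longrightarrow> f \<delta> \<le> ereal (- (k / \<delta>))"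
  shows "(f \<longlongrightarrow> - \<infinity>) (at_right 0)"
  unfolding tendsto_MInfty eventually_at_right_field
proof (intro allI exI conjI impI)
  fix c :: real
  show "0 < min d (k / (\<bar>c\<bar> + 1))" using d k by simp
  fix \<delta> assume \<delta>: "0 < \<delta>" "\<delta> < min d (k / (\<bar>c\<bar> + 1))"
  then have "\<bar>c\<bar> + 1 < k / \<delta>" by (simp add: field_simps)
  then have "- (k / \<delta>) < c" by linarith
  then show "f \<delta> < ereal c" using le[of \<delta>] \<delta> by (simp add: le_less_trans)
qed

context regular_test_function
begin

lemma Q_notC_le_exponential_of_counts:
  fixes \<eta>0 :: "nat \<Rightarrow> bool"
  assumes N: "2 \<le> N" and \<epsilon>: "0 < \<epsilon>" and \<delta>: "0 < \<delta>" and \<delta>_small: "\<delta> \<le> \<epsilon> / (10 * (A + B))"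
    and K: "4 * real N ^ 3 * T \<le> real K" and L: "4 * real N ^ 3 * \<delta> \<le> real L" "real L \<le> 5 * real N ^ 3 * \<delta>"
    and N_large: "\<epsilon>\<^sup>2 / (40 * A\<^sup>2) / \<delta> * real N \<le> real N ^ 3 * min T \<delta>"
  shows "Q_notC N T \<eta>0 H \<delta> \<epsilon> \<le> (1 + real K + 2 * real K * (real L + 1)) * exp (- (\<epsilon>\<^sup>2 / (40 * A\<^sup>2) / \<delta>) * real N)"
proof -
  define r where "r = real N ^ 3"
  define e where "e = exp (- (\<epsilon>\<^sup>2 / (40 * A\<^sup>2) / \<delta>) * real N)"
  have N1: "1 \<le> real N" and r: "1 \<le> r" using N by (simp_all add: r_def)
  have "0 < 4 * real N ^ 3 * \<delta>" using N \<delta> by simp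
  then have "0 < real L" using L(1) by linarith
  then have L1: "1 \<le> L" by simp
  have AB: "0 < A + B" using A_pos B_nonneg by simp
  have "real L * ((A + B) / r) \<le> (5 * r * \<delta>) * ((A + B) / r)"
    using L AB r by (intro mult_right_mono) (auto simp: r_def)
  also have "\<dots> = 5 * \<delta> * (A + B)" using r by (simp add: field_simps)
  also have "\<dots> \<le> 5 * (\<epsilon> / (10 * (A + B))) * (A + B)"
    using \<delta>_small AB by (intro mult_right_mono) auto
  also have "\<dots> = \<epsilon> / 2" using AB by (simp add: field_simps)
  finally have drift: "real L * ((A + B) / real N ^ 3) \<le> \<epsilon> / 2"
    by (simp add: r_def)
  have "r * min T \<delta> \<le> r * T" "r * min T \<delta> \<le> r * \<delta>" using r by (simp_all add: mult_left_mono)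
  then have e: "exp (- (r * T)) \<le> e" "exp (- (r * \<delta>)) \<le> e"
    using N_large by (simp_all add: e_def r_def)
  have slow: "exp (r * T) * (1/2) ^ K \<le> e"
    using order_trans[OF exp_mult_half_power_le e(1)] K by (simp add: r_def mult.assoc)
  have fast: "exp (r * \<delta>) * (1/2) ^ L \<le> e"
    using order_trans[OF exp_mult_half_power_le e(2)] L by (simp add: r_def mult.assoc)
  have "\<epsilon>\<^sup>2 / (40 * A\<^sup>2) / \<delta> * real N = \<epsilon>\<^sup>2 * (r * real N) / (8 * (5 * r * \<delta>) * A\<^sup>2)"
    using A_pos \<delta> r by (simp add: field_simps power2_eq_square)
  also have "\<dots> \<le> \<epsilon>\<^sup>2 * (r * real N) / (8 * real L * A\<^sup>2)"
    using L L1 A_pos r N1 \<delta> by (intro divide_left_mono mult_right_mono mult_left_mono mult_pos_pos) (auto simp: r_def)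
  also have "\<dots> = (\<epsilon>/2)\<^sup>2 / (2 * real L * (A / real N ^ 2)\<^sup>2)"
    using A_pos L1 N1 by (simp add: r_def field_simps power2_eq_square power3_eq_cube)
  finally have gauss: "exp (- (\<epsilon>/2)\<^sup>2 / (2 * real L * (A / real N ^ 2)\<^sup>2)) \<le> e"
    by (simp add: e_def)
  have "Q_notC N T \<eta>0 H \<delta> \<epsilon> \<le> e + real K * e + real K * (real L + 1) * (2 * e)"
    using Q_notC_le[OF N L1 \<epsilon> drift, of T \<eta>0 \<delta> K] slow fast gauss
    unfolding r_def[symmetric]
    by (smt (verit) mult_left_mono of_nat_0_le_iff zero_le_mult_iff)
  then show ?thesis by (simp add: e_def algebra_simps)
qed

lemma Q_notC_le_exponential:
  fixes \<eta>0 :: "nat \<Rightarrow> bool"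
  assumes N: "2 \<le> N" and \<epsilon>: "0 < \<epsilon>" and T: "0 < T" and \<delta>: "0 < \<delta>"
    and \<delta>_small: "\<delta> \<le> \<epsilon> / (10 * (A + B))"
    and N_large: "1 \<le> real N ^ 3 * \<delta>" "\<epsilon>\<^sup>2 / (40 * A\<^sup>2) / \<delta> \<le> real N ^ 2 * min T \<delta>"
  shows "Q_notC N T \<eta>0 H \<delta> \<epsilon> \<le> (1 + (4 * T + 1) + 2 * (4 * T + 1) * (4 * \<delta> + 2)) * (real N ^ 3)\<^sup>2
           * exp (- (\<epsilon>\<^sup>2 / (40 * A\<^sup>2) / \<delta>) * real N)"
proof -
  define r where "r = real N ^ 3"
  define K where "K = nat \<lceil>4 * r * T\<rceil>"
  define L where "L = nat \<lceil>4 * r * \<delta>\<rceil>"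
  have r: "1 \<le> r" "1 \<le> r * \<delta>" using N N_large(1) by (simp_all add: r_def)
  have ceiling: "x \<le> real (nat \<lceil>x\<rceil>) \<and> real (nat \<lceil>x\<rceil>) \<le> x + 1" if "0 \<le> x" for x :: real
    using that by (auto simp: of_nat_nat)
  have K: "4 * r * T \<le> real K" "real K \<le> (4 * T + 1) * r"
    unfolding K_def using ceiling[of "4 * r * T"] r T by (simp_all add: algebra_simps)
  have "4 * r * \<delta> \<le> real L" "real L \<le> 4 * r * \<delta> + 1"
    unfolding L_def using ceiling[of "4 * r * \<delta>"] r \<delta> by simp_all
  moreover have "(4 * \<delta> + 2) * r = 4 * r * \<delta> + 2 * r" by (simp add: algebra_simps)
  ultimately have L: "4 * r * \<delta> \<le> real L" "real L \<le> 5 * r * \<delta>" "real L + 1 \<le> (4 * \<delta> + 2) * r"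
    using r by linarith+
  have "\<epsilon>\<^sup>2 / (40 * A\<^sup>2) / \<delta> * real N \<le> real N ^ 3 * min T \<delta>"
    using mult_right_mono[OF N_large(2) of_nat_0_le_iff[of N]] by (simp add: power2_eq_square power3_eq_cube mult_ac)
  then have "Q_notC N T \<eta>0 H \<delta> \<epsilon> \<le> (1 + real K + 2 * real K * (real L + 1)) * exp (- (\<epsilon>\<^sup>2 / (40 * A\<^sup>2) / \<delta>) * real N)"
    using K L unfolding r_def
    by (intro Q_notC_le_exponential_of_counts N \<epsilon> \<delta> \<delta>_small) simp_all
  also have "\<dots> \<le> (1 + (4 * T + 1) + 2 * (4 * T + 1) * (4 * \<delta> + 2)) * r\<^sup>2 * exp (- (\<epsilon>\<^sup>2 / (40 * A\<^sup>2) / \<delta>) * real N)"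
  proof (intro mult_right_mono)
    have "real K * (real L + 1) \<le> ((4 * T + 1) * r) * ((4 * \<delta> + 2) * r)"
      using K L by (intro mult_mono) auto
    moreover have "r \<le> r\<^sup>2" using r by (simp add: power2_eq_square)
    then have "real K \<le> (4 * T + 1) * r\<^sup>2" "1 \<le> r\<^sup>2"
      using K r T order_trans[OF K(2) mult_left_mono[of r "r\<^sup>2"]] by simp_all
    ultimately show "1 + real K + 2 * real K * (real L + 1) \<le> (1 + (4 * T + 1) + 2 * (4 * T + 1) * (4 * \<delta> + 2)) * r\<^sup>2"
      by (simp add: power2_eq_square algebra_simps)
  qed simp
  finally show ?thesis unfolding r_def .
qed

lemma limsup_scaled_log_Q_notC_le:
  fixes \<eta>0 :: "nat \<Rightarrow> nat \<Rightarrow> bool"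
  assumes \<epsilon>: "0 < \<epsilon>" and T: "0 < T" and \<delta>: "0 < \<delta>" and \<delta>_small: "\<delta> \<le> \<epsilon> / (10 * (A + B))"
  shows "limsup (\<lambda>N. scaled_log N (Q_notC N T (\<eta>0 N) H \<delta> \<epsilon>)) \<le> ereal (- (\<epsilon>\<^sup>2 / (80 * A\<^sup>2) / \<delta>))"
proof -
  define k where "k = \<epsilon>\<^sup>2 / (40 * A\<^sup>2) / \<delta>"
  define C where "C = 1 + (4 * T + 1) + 2 * (4 * T + 1) * (4 * \<delta> + 2)"
  have k: "0 < k" using \<epsilon> \<delta> A_pos by (simp add: k_def)
  have C: "0 < C" using T \<delta> by (simp add: C_def add_pos_nonneg)
  have "eventually (\<lambda>N. max 2 (max (1 / \<delta>) (k / min T \<delta>)) \<le> real N) sequentially"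
    using filterlim_real_sequentially unfolding filterlim_at_top by blast
  then have "eventually (\<lambda>N. Q_notC N T (\<eta>0 N) H \<delta> \<epsilon> \<le> C * real N ^ 6 * exp (- k * real N)) sequentially"
  proof eventually_elim
    case (elim N)
    then have N: "2 \<le> N" "1 / \<delta> \<le> real N" "k / min T \<delta> \<le> real N" by auto
    have N_pow: "real N \<le> real N ^ 2" "real N \<le> real N ^ 3"
      using N(1) by (simp_all add: power_increasing[of 1 _ "real N", simplified])
    have "1 \<le> real N * \<delta>" "k \<le> real N * min T \<delta>"
      using N \<delta> T by (simp_all add: field_simps)
    moreover have "real N * \<delta> \<le> real N ^ 3 * \<delta>" "real N * min T \<delta> \<le> real N ^ 2 * min T \<delta>"
      using N_pow T \<delta> by (simp_all add: mult_right_mono)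
    ultimately have "1 \<le> real N ^ 3 * \<delta>" "k \<le> real N ^ 2 * min T \<delta>" by linarith+
    then show ?case
      using Q_notC_le_exponential[OF N(1) \<epsilon> T \<delta> \<delta>_small, of "\<eta>0 N"]
      by (simp add: k_def C_def flip: power_mult)
  qed
  then have "limsup (\<lambda>N. scaled_log N (Q_notC N T (\<eta>0 N) H \<delta> \<epsilon>)) \<le> ereal (- (k / 2))"
    using k by (intro limsup_scaled_log_le[OF C]) (simp_all add: Q_notC_def)
  then show ?thesis by (simp add: k_def mult.assoc)
qed

end

theorem lemma5p15:
  fixes T \<epsilon> :: real and H :: "real \<Rightarrow> real" and \<eta>0 :: "nat \<Rightarrow> nat \<Rightarrow> bool"
  assumes "T > 0" and "\<epsilon> > 0" and "C2_torus H"
  shows "((\<lambda>\<delta>. limsup (\<lambda>N. scaled_log N (Q_notC N T (\<eta>0 N) H \<delta> \<epsilon>))) \<longlongrightarrow> - \<infinity>) (at_right 0)"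
proof -
  obtain A B where "regular_test_function H A B"
    using C2_torus_imp_regular_test_function[OF assms(3)] .
  then interpret regular_test_function H A B .
  show ?thesis
  proof (rule tendsto_MInfty_at_right_0_of_le)
    show "0 < \<epsilon> / (10 * (A + B))" "0 < \<epsilon>\<^sup>2 / (80 * A\<^sup>2)"
      using assms(2) A_pos B_nonneg by simp_all
    show "limsup (\<lambda>N. scaled_log N (Q_notC N T (\<eta>0 N) H \<delta> \<epsilon>)) \<le> ereal (- (\<epsilon>\<^sup>2 / (80 * A\<^sup>2) / \<delta>))"
      if "0 < \<delta>" "\<delta> < \<epsilon> / (10 * (A + B))" for \<delta>
      using limsup_scaled_log_Q_notC_le[of \<epsilon> T \<delta> \<eta>0] that assms by simp
  qed
qed

end
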